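(* Let $m,n\ge 1$ and let $k>0$ and $l$ be fixed integers. Let $P,Q$ be constant $n\times n$ complex matrices, let $\mathfrak{R}(P)$ be a finite set of distinct invertible constant $n\times n$ matrices $\Lambda$ with $-(\Lambda^{k}+\Lambda^{k-l})=P$, and let $\mathfrak{R}(Q)$ be a finite set of distinct invertible constant $n\times n$ matrices $\tilde\Lambda$ with $-(\tilde\Lambda^{k}+\tilde\Lambda^{k-l})=Q$. For each $\Lambda\in\mathfrak{R}(P)$ let $A_\Lambda$ be a constant $m\times n$ matrix, for each $\tilde\Lambda\in\mathfrak{R}(Q)$ let $B_{\tilde\Lambda}$ be a constant $n\times m$ matrix, and for each pair let $X_{\tilde\Lambda,\Lambda}$ be a constant $n\times n$ matrix satisfying $\tilde\Lambda^{-l}X_{\tilde\Lambda,\Lambda}\Lambda^{l}-X_{\tilde\Lambda,\Lambda}=B_{\tilde\Lambda}A_\Lambda$. Let $\tilde\omega=\tilde\omega(t)$ be a differentiable $n\times n$ matrix function of $t$ only with $Q\,\tilde\omega=\tilde\omega\,P$, and set $\gamma_2=-\tilde\omega_t$. Define $$\theta=\sum_{\Lambda\in\mathfrak{R}(P)}A_\Lambda e^{\Lambda^l t}\Lambda^j,\qquad \eta=\sum_{\tilde\Lambda\in\mathfrak{R}(Q)}e^{-\tilde\Lambda^l t}\tilde\Lambda^{-j}B_{\tilde\Lambda},$$ $$\tilde\Omega=\sum_{\Lambda\in\mathfrak{R}(P),\,\tilde\Lambda\in\mathfrak{R}(Q)}e^{-\tilde\Lambda^l t}\tilde\Lambda^{-j}X_{\tilde\Lambda,\Lambda}e^{\Lambda^l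 t}\Lambda^j+\tilde\omega,$$ and assume $\tilde\Omega$ is invertible. Let $\varphi_0$ be a constant $m\times m$ matrix. Then $$\varphi=\varphi_0+\theta\,\tilde\Omega^{-1}\eta_{(-l)},\qquad \hat q=-\theta\,\tilde\Omega^{-1}\gamma_2,\qquad \tilde r=-\tilde\Omega_{(l)}^{-1}\eta$$ solve the system $$(\varphi_{(k)}-\varphi)_t+(\varphi_{(k)}-\varphi+I)(\varphi_{(l)}-\varphi)_{(k-l)}-(\varphi_{(l)}-\varphi)(\varphi_{(k)}-\varphi+I)=(\hat q\,\tilde r_{(-l)})_{(k)}-\hat q\,\tilde r_{(-l)},$$ $$\hat q_{(k)}=-(\varphi_{(k)}-\varphi+I)\,\hat q_{(k-l)}-\hat q\,P,\qquad \tilde r_{(-l)}=-\tilde r\,(\varphi_{(k)}-\varphi+I)-P\,\tilde r_{(k-l)}.$$ Consequently $W=\varphi_{(1)}-\varphi+\frac1k I$ together with $\hat q,\tilde r$ solves $$\Big(\sum_{i=0}^{k-1}W_{(i)}\Big)_t+\sum_{i=0}^{k-1}W_{(i)}\sum_{i=k-l}^{k-1}W_{(i)}-\sum_{i=0}^{l-1}W_{(i)}\sum_{i=0}^{k-1}W_{(i)}=(\hat q\,\tilde r_{(-l)})_{(k)}-\hat q\,\tilde r_{(-l)},$$ $$\hat q_{(k)}=-\sum_{i=0}^{k-1}W_{(i)}\,\hat q_{(k-l)}-\hat q\,P,\qquad \tilde r_{(-l)}=-\tilde r\sum_{i=0}^{k-1}W_{(i)}-P\,\tilde r_{(k-l)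}.$$
   Context: All dependent variables are matrix-valued functions of a continuous variable $t$ and a discrete variable $j\in\mathbb{Z}$; subscript $t$ denotes the derivative with respect to $t$, and for an integer $s$, $f_{(s)}(t,j)=f(t,j+s)$ denotes the shifted function. $I$ denotes the identity matrix. *)

theory Defs
  imports "HOL-Analysis.Analysis"
begin

fun matpow :: "'a::comm_ring_1^'n^'n \<Rightarrow> nat \<Rightarrow> 'a^'n^'n" where
  "matpow M 0 = mat 1"
| "matpow M (Suc n) = M ** matpow M n"

text \<open>Integer powers of square matrices; negative powers use the matrix inverse
  (only meaningful for invertible matrices).\<close>
definition mpow_int :: "complex^'n^'n \<Rightarrow> int \<Rightarrow> complex^'n^'n" where
  "mpow_int M j = (if 0 \<le> j then matpow M (nat j) else matpow (matrix_inv M) (nat (- j)))"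

definition mexp :: "complex^'n^'n \<Rightarrow> complex^'n^'n" where
  "mexp M = (\<Sum>i. (1 / fact i) *\<^sub>R matpow M i)"

text \<open>Sum with integer limits, using the standard convention for reversed limits:
  \<Sum>_{i=a}^{b} f i = - \<Sum>_{i=b+1}^{a-1} f i when b < a - 1 (empty when b = a - 1).\<close>
definition isum :: "(int \<Rightarrow> 'a::ab_group_add) \<Rightarrow> int \<Rightarrow> int \<Rightarrow> 'a" where
  "isum f a b = (if a \<le> b + 1 then sum f {a..b} else - sum f {b+1..a-1})"

end

theory Submission
  imports Defs
begin

text \<open>The matrices \<theta>, \<eta>, \<Omega> satisfy in the discrete variable
    \<Omega>(j+l) = \<Omega>(j) + \<eta>(j) \<theta>(j),          \<theta>(j+k) + \<theta>(j+k-l) = - \<theta>(j) P,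
    \<eta>(j-l) + \<eta>(j) = - Q \<eta>(j+k-l),        Q \<Omega>(j+k-l) = \<Omega>(j) P + \<eta>(j-l) \<theta>(j+k-l),
  and in time
    d\<theta>(j)/dt = \<theta>(j+l),   d\<eta>(j)/dt = - \<eta>(j-l),   d\<Omega>(j)/dt = \<eta>(j-l) \<theta>(j) + d\<omega>/dt.
  For the exponential sums these hold summand by summand, because every \<Lambda> solves the
  dispersion relation and X solves the Sylvester equation. The system is an algebraic consequence
  of these relations alone. With F(j) = \<theta>(j) \<Omega>(j)\<inverse> \<eta>(j-l) = \<phi>(j) - \<phi>0 and
  U(j) = I + F(j+k) - F(j) they give
    U(j) \<theta>(j+k-l) \<Omega>(j+k-l)\<inverse> = - \<theta>(j+k) \<Omega>(j+k)\<inverse> - \<theta>(j) \<Omega>(j)\<inverse> Q,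
    \<Omega>(j+l)\<inverse> \<eta>(j) U(j) = - \<Omega>(j)\<inverse> \<eta>(j-l) - P \<Omega>(j+k)\<inverse> \<eta>(j+k-l),
  which are the equations for q and r and, after differentiating F, yield the equation for \<phi>.
  The form in W follows because W(j+a) + ... + W(j+b) telescopes to
  \<phi>(j+b+1) - \<phi>(j+a) + (b-a+1)/k I.\<close>

lemma matrix_add_rdistrib: "(A + B) ** C = A ** C + B ** C"
  for A B :: "'a::semiring_1^'k^'m" and C :: "'a^'n^'k"
  by (simp add: vec_eq_iff matrix_matrix_mult_def distrib_right sum.distrib)

lemma matrix_diff_ldistrib: "A ** (B - C) = A ** B - A ** C"
  for A :: "'a::ring_1^'k^'m" and B C :: "'a^'n^'k"
  by (simp add: vec_eq_iff matrix_matrix_mult_def right_diff_distrib sum_subtractf)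

lemma matrix_diff_rdistrib: "(A - B) ** C = A ** C - B ** C"
  for A B :: "'a::ring_1^'k^'m" and C :: "'a^'n^'k"
  by (simp add: vec_eq_iff matrix_matrix_mult_def left_diff_distrib sum_subtractf)

lemma matrix_minus_left: "(- A) ** C = - (A ** C)"
  for A :: "'a::ring_1^'k^'m" and C :: "'a^'n^'k"
  by (simp add: vec_eq_iff matrix_matrix_mult_def sum_negf)

lemma matrix_minus_right: "A ** (- C) = - (A ** C)"
  for A :: "'a::ring_1^'k^'m" and C :: "'a^'n^'k"
  by (simp add: vec_eq_iff matrix_matrix_mult_def sum_negf)

lemma matrix_sum_ldistrib: "A ** sum f S = (\<Sum>x\<in>S. A ** f x)"
  for A :: "'a::semiring_1^'k^'m" and f :: "'b \<Rightarrow> 'a^'n^'k"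
  by (induction S rule: infinite_finite_induct) (simp_all add: matrix_add_ldistrib)

lemma matrix_sum_rdistrib: "sum f S ** C = (\<Sum>x\<in>S. f x ** C)"
  for C :: "'a::semiring_1^'n^'k" and f :: "'b \<Rightarrow> 'a^'k^'m"
  by (induction S rule: infinite_finite_induct) (simp_all add: matrix_add_rdistrib)

lemmas matrix_ring_simps = matrix_mul_assoc matrix_add_ldistrib matrix_add_rdistrib
  matrix_diff_ldistrib matrix_diff_rdistrib matrix_minus_left matrix_minus_right

lemma bounded_bilinear_matrix_mult:
  "bounded_bilinear (\<lambda>(A::complex^'k^'m) (B::complex^'n^'k). A ** B)"
  unfolding bilinear_conv_bounded_bilinear[symmetric] bilinear_def linear_iff
  by (simp add: matrix_add_ldistrib matrix_add_rdistrib scalar_matrix_assoc matrix_scalar_ac)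

lemma tendsto_matrix_mult:
  "(f \<longlongrightarrow> a) F \<Longrightarrow> (g \<longlongrightarrow> b) F \<Longrightarrow>
    ((\<lambda>x. (f x :: complex^'k^'m) ** (g x :: complex^'n^'k)) \<longlongrightarrow> a ** b) F"
  by (rule bounded_bilinear.tendsto[OF bounded_bilinear_matrix_mult])

lemma has_vector_derivative_matrix_mult:
  "(f has_vector_derivative f') (at x) \<Longrightarrow> (g has_vector_derivative g') (at x) \<Longrightarrow>
   ((\<lambda>x. (f x :: complex^'k^'m) ** (g x :: complex^'n^'k)) has_vector_derivative
      f x ** g' + f' ** g x) (at x)"
  using bounded_bilinear.has_vector_derivative[OF bounded_bilinear_matrix_mult] by blast

section \<open>The matrix exponential\<close>

text \<open>The library's \<open>exp\<close> and its derivative are available in Banach algebras, and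
  \<open>complex^'n^'n\<close> is not one (its \<open>*\<close> is entrywise). Matrices are therefore mapped into the algebra
  of bounded operators on \<open>complex^'n\<close> (operator norm, composition), and \<open>mexp\<close> is recovered
  through the bounded linear map \<open>matrix_of_endo\<close>.\<close>

typedef (overloaded) 'n endo = "UNIV :: ((complex^'n) \<Rightarrow>\<^sub>L (complex^'n)) set" by simp

setup_lifting type_definition_endo

instantiation endo :: (finite) real_normed_vector
begin
lift_definition norm_endo :: "'a endo \<Rightarrow> real" is norm .
lift_definition minus_endo :: "'a endo \<Rightarrow> 'a endo \<Rightarrow> 'a endo" is "(-)" .
lift_definition plus_endo :: "'a endo \<Rightarrow> 'a endo \<Rightarrow> 'a endo" is "(+)" .
lift_definition uminus_endo :: "'a endo \<Rightarrow> 'a endo" is uminus .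
lift_definition zero_endo :: "'a endo" is 0 .
lift_definition scaleR_endo :: "real \<Rightarrow> 'a endo \<Rightarrow> 'a endo" is scaleR .
definition dist_endo :: "'a endo \<Rightarrow> 'a endo \<Rightarrow> real" where "dist_endo a b = norm (a - b)"
definition uniformity_endo :: "('a endo \<times> 'a endo) filter"
  where "uniformity_endo = (INF e\<in>{0 <..}. principal {(x, y). dist x y < e})"
definition open_endo :: "'a endo set \<Rightarrow> bool"
  where "open_endo S = (\<forall>x\<in>S. \<forall>\<^sub>F (x', y) in uniformity. x' = x \<longrightarrow> y \<in> S)"
definition sgn_endo :: "'a endo \<Rightarrow> 'a endo" where "sgn_endo x = scaleR (inverse (norm x)) x"
instance
  by standard
    (unfold dist_endo_def open_endo_def sgn_endo_def uniformity_endo_def,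
     (rule refl | (transfer, force simp: norm_triangle_ineq algebra_simps))+)
end

instantiation endo :: (finite) real_normed_algebra_1
begin
lift_definition times_endo :: "'a endo \<Rightarrow> 'a endo \<Rightarrow> 'a endo" is "(o\<^sub>L)" .
lift_definition one_endo :: "'a endo" is id_blinfun .
instance
proof
  show "(0::'a endo) \<noteq> 1"
  proof
    assume "(0::'a endo) = 1"
    then have "blinfun_apply (Rep_endo 1) (axis undefined 1) = blinfun_apply (Rep_endo 0) (axis undefined 1)"
      by simp
    then show False
      by (simp add: one_endo.rep_eq zero_endo.rep_eq)
  qed
qed (transfer; auto intro!: blinfun_eqI simp: blinfun.bilinear_simps norm_blinfun_compose)+
end

instance endo :: (finite) banach
proof
  fix X :: "nat \<Rightarrow> 'a endo"
  have dist_rep: "dist x y = dist (Rep_endo x) (Rep_endo y)" for x y :: "'a endo"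
    unfolding dist_endo_def dist_norm by transfer simp
  assume "Cauchy X"
  then have "Cauchy (\<lambda>n. Rep_endo (X n))" unfolding Cauchy_def dist_rep .
  then obtain L where "(\<lambda>n. Rep_endo (X n)) \<longlonglongrightarrow> L" using Cauchy_convergent convergent_def by blast
  then have "X \<longlonglongrightarrow> Abs_endo L"
    unfolding tendsto_iff dist_rep by (simp add: Abs_endo_inverse)
  then show "convergent X" by (auto simp: convergent_def)
qed

definition endo_of_matrix :: "complex^'n^'n \<Rightarrow> 'n::finite endo" where
  "endo_of_matrix M = Abs_endo (Blinfun (\<lambda>v. M *v v))"

definition matrix_of_endo :: "'n::finite endo \<Rightarrow> complex^'n^'n" where
  "matrix_of_endo F = matrix (blinfun_apply (Rep_endo F))"

lemma blinfun_apply_endo_of_matrix: "blinfun_apply (Rep_endo (endo_of_matrix M)) = (\<lambda>v. M *v v)"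
  by (simp add: endo_of_matrix_def Abs_endo_inverse bounded_linear_Blinfun_apply)

lemma matrix_of_endo_of_matrix [simp]: "matrix_of_endo (endo_of_matrix M) = M"
  by (simp add: matrix_of_endo_def blinfun_apply_endo_of_matrix)

lemma endo_of_matrix_mult: "endo_of_matrix (M ** N) = endo_of_matrix M * endo_of_matrix N"
  by (rule Rep_endo_inject[THEN iffD1], rule blinfun_eqI)
    (simp add: times_endo.rep_eq blinfun_apply_endo_of_matrix matrix_vector_mul_assoc)

lemma endo_of_matrix_one: "endo_of_matrix (mat 1) = 1"
  by (rule Rep_endo_inject[THEN iffD1], rule blinfun_eqI)
    (simp add: one_endo.rep_eq blinfun_apply_endo_of_matrix)

lemma endo_of_matrix_scaleR: "endo_of_matrix (c *\<^sub>R M) = c *\<^sub>R endo_of_matrix M"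
  by (rule Rep_endo_inject[THEN iffD1], rule blinfun_eqI)
    (simp add: scaleR_endo.rep_eq blinfun.scaleR_left blinfun_apply_endo_of_matrix vec_eq_iff
      matrix_vector_mult_def scaleR_sum_right)

lemma endo_of_matrix_matpow: "endo_of_matrix (matpow M i) = endo_of_matrix M ^ i"
  by (induction i) (simp_all add: endo_of_matrix_one endo_of_matrix_mult)

lemma matrix_of_endo_mult_left: "matrix_of_endo (endo_of_matrix M * F) = M ** matrix_of_endo F"
  by (simp add: matrix_of_endo_def vec_eq_iff times_endo.rep_eq blinfun_apply_endo_of_matrix
      matrix_def matrix_vector_mult_def matrix_matrix_mult_def)

lemma matrix_of_endo_scaleR: "matrix_of_endo (r *\<^sub>R F) = r *\<^sub>R matrix_of_endo F"
  by (simp add: matrix_of_endo_def matrix_def vec_eq_iff scaleR_endo.rep_eq blinfun.scaleR_left)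

lemma norm_axis_1_complex: "norm (axis j (1::complex)) = 1"
  unfolding norm_vec_def L2_set_def axis_def
  by (simp add: if_distrib[where f=norm] if_distrib[where f=power2] cong: if_cong)

lemma norm_sum_nth_ge: "norm x \<le> (\<Sum>i\<in>UNIV. norm (x $ i))"
  for x :: "'a::real_normed_vector^'n"
  unfolding norm_vec_def by (rule L2_set_le_sum) simp

lemma bounded_linear_matrix_of_endo: "bounded_linear (matrix_of_endo :: 'n::finite endo \<Rightarrow> _)"
proof (rule bounded_linear_intro[where K = "real CARD('n) * real CARD('n)"])
  fix x y :: "'n endo" and r :: real
  show "matrix_of_endo (x + y) = matrix_of_endo x + matrix_of_endo y"
    by (simp add: matrix_of_endo_def matrix_def vec_eq_iff plus_endo.rep_eq blinfun.add_left)
  show "matrix_of_endo (r *\<^sub>R x) = r *\<^sub>R matrix_of_endo x"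
    by (rule matrix_of_endo_scaleR)
  have entry: "norm (matrix_of_endo x $ i $ j) \<le> norm x" for i j
  proof -
    have "norm (matrix_of_endo x $ i $ j) \<le> norm (blinfun_apply (Rep_endo x) (axis j 1))"
      unfolding matrix_of_endo_def matrix_def by (simp add: Finite_Cartesian_Product.norm_nth_le)
    also have "\<dots> \<le> norm (Rep_endo x) * norm (axis j (1::complex))" by (rule norm_blinfun)
    finally show ?thesis by (simp add: norm_endo.rep_eq norm_axis_1_complex)
  qed
  have "norm (matrix_of_endo x) \<le> (\<Sum>i\<in>UNIV. \<Sum>j\<in>UNIV. norm (matrix_of_endo x $ i $ j))"
    by (rule order_trans[OF norm_sum_nth_ge sum_mono[OF norm_sum_nth_ge]])
  also have "\<dots> \<le> (\<Sum>i\<in>(UNIV::'n set). \<Sum>j\<in>(UNIV::'n set). norm x)"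
    by (intro sum_mono entry)
  finally show "norm (matrix_of_endo x) \<le> norm x * (real CARD('n) * real CARD('n))"
    by (simp add: mult_ac)
qed

lemma sums_matrix_of_endo_exp:
  "(\<lambda>i. (1 / fact i) *\<^sub>R matpow M i) sums matrix_of_endo (exp (endo_of_matrix M))"
proof -
  have "(\<lambda>i. endo_of_matrix M ^ i /\<^sub>R fact i) sums exp (endo_of_matrix M)"
    unfolding exp_def by (rule summable_sums[OF summable_exp_generic])
  from bounded_linear.sums[OF bounded_linear_matrix_of_endo this] show ?thesis
    by (simp add: matrix_of_endo_scaleR inverse_eq_divide flip: endo_of_matrix_matpow)
qed

lemma mexp_eq_exp: "mexp M = matrix_of_endo (exp (endo_of_matrix M))"
  unfolding mexp_def using sums_matrix_of_endo_exp by (rule sums_unique[symmetric])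

lemma mexp_sums: "(\<lambda>i. (1 / fact i) *\<^sub>R matpow M i) sums mexp M"
  using sums_matrix_of_endo_exp by (simp add: mexp_eq_exp)

lemma matpow_commute: "N ** M = M ** N \<Longrightarrow> N ** matpow M i = matpow M i ** N"
  by (induction i) (simp_all add: matrix_mul_assoc, metis matrix_mul_assoc)

lemma mexp_commute:
  assumes "N ** M = M ** N"
  shows "N ** mexp M = mexp M ** N"
proof -
  have "(\<lambda>i. N ** ((1 / fact i) *\<^sub>R matpow M i)) sums (N ** mexp M)"
    by (rule bounded_linear.sums[OF bounded_bilinear.bounded_linear_right[OF bounded_bilinear_matrix_mult] mexp_sums])
  moreover have "(\<lambda>i. ((1 / fact i) *\<^sub>R matpow M i) ** N) sums (mexp M ** N)"
    by (rule bounded_linear.sums[OF bounded_bilinear.bounded_linear_left[OF bounded_bilinear_matrix_mult] mexp_sums])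
  ultimately show ?thesis
    by (simp add: matrix_scalar_ac scalar_matrix_assoc[symmetric] matpow_commute[OF assms] sums_unique2)
qed

lemma mexp_scaleR_commute_with:
  "N ** M = M ** N \<Longrightarrow> N ** mexp (s *\<^sub>R M) = mexp (s *\<^sub>R M) ** N"
  by (rule mexp_commute) (simp add: matrix_scalar_ac scalar_matrix_assoc[symmetric])

lemma mexp_scaleR_commute:
  "mexp (s *\<^sub>R M) ** M = M ** mexp (s *\<^sub>R M)"
  "Z ** mexp (s *\<^sub>R M) ** M = Z ** M ** mexp (s *\<^sub>R M)"
proof -
  show "mexp (s *\<^sub>R M) ** M = M ** mexp (s *\<^sub>R M)"
    by (rule mexp_scaleR_commute_with[symmetric]) (rule refl)
  then show "Z ** mexp (s *\<^sub>R M) ** M = Z ** M ** mexp (s *\<^sub>R M)"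
    by (simp flip: matrix_mul_assoc)
qed

lemma has_vector_derivative_mexp:
  "((\<lambda>s. mexp (s *\<^sub>R M)) has_vector_derivative mexp (t *\<^sub>R M) ** M) (at t)"
proof -
  have "((\<lambda>s. mexp (s *\<^sub>R M)) has_vector_derivative M ** mexp (t *\<^sub>R M)) (at t)"
    using bounded_linear.has_vector_derivative[OF bounded_linear_matrix_of_endo
        exp_scaleR_has_vector_derivative_left[of "endo_of_matrix M"]]
    by (simp add: mexp_eq_exp endo_of_matrix_scaleR matrix_of_endo_mult_left)
  then show ?thesis by (simp only: mexp_scaleR_commute(1))
qed

section \<open>Derivative of the matrix inverse\<close>

lemma matrix_inv_right: "invertible A \<Longrightarrow> A ** matrix_inv A = mat 1"
  and matrix_inv_left: "invertible A \<Longrightarrow> matrix_inv A ** A = mat 1"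
  unfolding invertible_def matrix_inv_def by (metis (mono_tags, lifting) someI_ex)+

lemma matrix_inv_cramer:
  fixes A :: "complex^'n^'n"
  assumes "invertible A"
  shows "matrix_inv A = (\<chi> i j. det (\<chi> a b. if b = i then axis j 1 $ a else A $ a $ b) / det A)"
proof -
  have "det A \<noteq> 0" using assms invertible_det_nz by blast
  moreover have "A *v (matrix_inv A *v axis j 1) = axis j 1" for j
    by (simp add: matrix_vector_mul_assoc matrix_inv_right[OF assms])
  ultimately have "matrix_inv A *v axis j 1 =
      (\<chi> i. det (\<chi> a b. if b = i then axis j 1 $ a else A $ a $ b) / det A)" for j
    using cramer by blast
  then show ?thesis
    by (simp add: vec_eq_iff matrix_vector_mult_def axis_def if_distrib cong: if_cong)
qed

lemma tendsto_det: "(F \<longlongrightarrow> A) net \<Longrightarrow> ((\<lambda>s. det (F s :: complex^'n^'n)) \<longlongrightarrow> det A) net"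
  unfolding det_def by (intro tendsto_intros)

lemma tendsto_matrix_inv:
  fixes F :: "'a \<Rightarrow> complex^'n^'n"
  assumes "(F \<longlongrightarrow> A) net" "\<And>s. invertible (F s)" "invertible A"
  shows "((\<lambda>s. matrix_inv (F s)) \<longlongrightarrow> matrix_inv A) net"
proof -
  have "det A \<noteq> 0" using assms(3) invertible_det_nz by blast
  with assms(1) show ?thesis
    unfolding matrix_inv_cramer[OF assms(2)] matrix_inv_cramer[OF assms(3)]
    by (intro tendsto_vec_lambda tendsto_divide tendsto_det) (auto intro: tendsto_vec_nth)
qed

lemma has_vector_derivative_slope:
  fixes f R :: "real \<Rightarrow> 'b::real_normed_vector"
  assumes slope: "\<And>y. f y = f t + (y - t) *\<^sub>R R y" and cont: "isCont R t"
  shows "(f has_vector_derivative R t) (at t)"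
  unfolding has_vector_derivative_def has_derivative_iff_norm
proof
  have "((\<lambda>y. norm (R y - R t)) \<longlongrightarrow> 0) (at t)"
    using cont unfolding isCont_def by (simp add: tendsto_norm_zero_iff LIM_zero)
  moreover have "\<forall>\<^sub>F y in at t. norm (R y - R t) = norm (f y - f t - (y - t) *\<^sub>R R t) / norm (y - t)"
  proof (unfold eventually_at_filter, rule eventuallyI, intro impI)
    fix y assume "y \<noteq> t"
    have "f y - f t - (y - t) *\<^sub>R R t = (y - t) *\<^sub>R (R y - R t)"
      using slope[of y] by (simp add: algebra_simps)
    with \<open>y \<noteq> t\<close> show "norm (R y - R t) = norm (f y - f t - (y - t) *\<^sub>R R t) / norm (y - t)"
      by simp
  qed
  ultimately show "((\<lambda>y. norm (f y - f t - (y - t) *\<^sub>R R t) / norm (y - t)) \<longlongrightarrow> 0) (at t)"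
    by (rule Lim_transform_eventually)
qed (rule bounded_linear_scaleR_left)

lemma isCont_slope:
  fixes f :: "real \<Rightarrow> 'b::real_normed_vector"
  assumes "(f has_vector_derivative f') (at t)"
  shows "isCont (\<lambda>y. if y = t then f' else (1 / (y - t)) *\<^sub>R (f y - f t)) t"
proof -
  let ?R = "\<lambda>y. if y = t then f' else (1 / (y - t)) *\<^sub>R (f y - f t)"
  have "((\<lambda>y. norm (f y - f t - (y - t) *\<^sub>R f') / norm (y - t)) \<longlongrightarrow> 0) (at t)"
    using assms unfolding has_vector_derivative_def has_derivative_iff_norm by simp
  moreover have "\<forall>\<^sub>F y in at t. norm (f y - f t - (y - t) *\<^sub>R f') / norm (y - t) = norm (?R y - f')"
  proof (unfold eventually_at_filter, rule eventuallyI, intro impI)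
    fix y assume "y \<noteq> t"
    then have "f y - f t - (y - t) *\<^sub>R f' = (y - t) *\<^sub>R (?R y - f')"
      by (simp add: algebra_simps)
    then show "norm (f y - f t - (y - t) *\<^sub>R f') / norm (y - t) = norm (?R y - f')"
      using \<open>y \<noteq> t\<close> by simp
  qed
  ultimately have "((\<lambda>y. norm (?R y - f')) \<longlongrightarrow> 0) (at t)"
    by (rule Lim_transform_eventually)
  then show ?thesis
    unfolding isCont_def by (simp add: tendsto_norm_zero_iff LIM_zero_iff)
qed

lemma has_vector_derivative_matrix_inv:
  fixes F :: "real \<Rightarrow> complex^'n^'n"
  assumes F: "(F has_vector_derivative F') (at t)" and inv: "\<And>s. invertible (F s)"
  shows "((\<lambda>s. matrix_inv (F s)) has_vector_derivative
      - (matrix_inv (F t) ** F' ** matrix_inv (F t))) (at t)"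
proof -
  define G where "G = (\<lambda>s. matrix_inv (F s))"
  define R where "R y = (if y = t then F' else (1 / (y - t)) *\<^sub>R (F y - F t))" for y
  have "isCont G t"
    unfolding G_def isCont_def
    by (rule tendsto_matrix_inv[OF has_vector_derivative_continuous[OF F, unfolded isCont_def] inv inv])
  moreover have "isCont R t"
    unfolding R_def by (rule isCont_slope[OF F])
  ultimately have "isCont (\<lambda>y. - (G y ** R y ** G t)) t"
    unfolding isCont_def by (intro tendsto_minus tendsto_matrix_mult tendsto_const)
  moreover have "G y = G t + (y - t) *\<^sub>R (- (G y ** R y ** G t))" for y
  proof (cases "y = t")
    case False
    \<comment> \<open>\<open>G y - G t = - G y (F y - F t) G t\<close>\<close>
    have "(y - t) *\<^sub>R (- (G y ** R y ** G t)) = - (G y ** (F y - F t) ** G t)"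
      using False by (simp add: R_def matrix_scalar_ac scalar_matrix_assoc[symmetric])
    also have "\<dots> = G y - G t"
      by (simp add: G_def matrix_ring_simps matrix_inv_left[OF inv] matrix_inv_right[OF inv]
          flip: matrix_mul_assoc)
    finally show ?thesis by simp
  qed simp
  ultimately have "(G has_vector_derivative - (G t ** R t ** G t)) (at t)"
    by (intro has_vector_derivative_slope)
  then show ?thesis by (simp add: G_def R_def)
qed

lemma mpow_int_nonneg: "0 \<le> z \<Longrightarrow> mpow_int M z = matpow M (nat z)"
  by (simp add: mpow_int_def)

lemma mpow_int_nonpos: "z \<le> 0 \<Longrightarrow> mpow_int M z = matpow (matrix_inv M) (nat (- z))"
  by (cases "z = 0") (simp_all add: mpow_int_def)

lemma mpow_int_succ:
  assumes "invertible M"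
  shows "mpow_int M (z + 1) = mpow_int M z ** M"
proof (cases "0 \<le> z")
  case True
  then have "nat (z + 1) = Suc (nat z)" by simp
  with True show ?thesis by (simp add: mpow_int_nonneg matpow_commute)
next
  case False
  then have "nat (- z) = Suc (nat (- (z + 1)))" by simp
  with False show ?thesis
    by (simp add: mpow_int_nonpos matpow_commute[OF refl] matrix_inv_left[OF assms]
        flip: matrix_mul_assoc)
qed

lemma mpow_int_add:
  assumes "invertible M"
  shows "mpow_int M (a + b) = mpow_int M a ** mpow_int M b"
proof (induction b rule: int_induct[where k = 0])
  case base
  then show ?case by (simp add: mpow_int_def)
next
  case (step1 i)
  then show ?case
    using mpow_int_succ[OF assms, of "a + i"] mpow_int_succ[OF assms, of i]
    by (simp add: add.assoc matrix_mul_assoc)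
next
  case (step2 i)
  have "mpow_int M (a + i) = mpow_int M (a + (i - 1)) ** M"
       "mpow_int M i = mpow_int M (i - 1) ** M"
    using mpow_int_succ[OF assms, of "a + (i - 1)"] mpow_int_succ[OF assms, of "i - 1"] by simp_all
  with step2 have "mpow_int M (a + (i - 1)) ** M ** matrix_inv M
      = mpow_int M a ** mpow_int M (i - 1) ** M ** matrix_inv M"
    by (simp add: matrix_mul_assoc)
  then show ?case
    by (simp add: matrix_inv_right[OF assms] flip: matrix_mul_assoc)
qed

lemma mpow_int_commute:
  "invertible M \<Longrightarrow> mpow_int M a ** mpow_int M b = mpow_int M b ** mpow_int M a"
  by (metis add.commute mpow_int_add)

lemma sum_int_telescope:
  fixes g :: "int \<Rightarrow> 'a::ab_group_add"
  assumes "a \<le> b + 1"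
  shows "(\<Sum>i=a..b. g (i + 1) - g i) = g (b + 1) - g a"
proof -
  from assms have "a - 1 \<le> b" by simp
  then show ?thesis
  proof (induction rule: int_ge_induct)
    case (step b)
    then have "{a..b + 1} = insert (b + 1) {a..b}" by auto
    with step show ?case by simp
  qed simp
qed

lemma isum_telescope:
  fixes g :: "int \<Rightarrow> 'a::real_vector"
  shows "isum (\<lambda>i. g (i + 1) - g i + c) a b = g (b + 1) - g a + of_int (b - a + 1) *\<^sub>R c"
proof -
  have sum: "(\<Sum>i=a..b. g (i + 1) - g i + c) = g (b + 1) - g a + of_int (b - a + 1) *\<^sub>R c"
    if "a \<le> b + 1" for a b
    using that by (simp add: sum.distrib sum_int_telescope sum_constant_scaleR)
  show ?thesis
    using sum[of a b] sum[of "b + 1" "a - 1"] by (simp add: isum_def algebra_simps)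
qed

lemma isum_shifted_differences:
  fixes \<phi> W :: "int \<Rightarrow> 'a::real_vector"
  assumes "k > 0" and W: "\<And>j. W j = \<phi> (j + 1) - \<phi> j + (1 / of_int k) *\<^sub>R c"
  shows "isum (\<lambda>i. W (j + i)) 0 (k - 1) = \<phi> (j + k) - \<phi> j + c"
    and "isum (\<lambda>i. W (j + i)) (k - l) (k - 1) = \<phi> (j + k) - \<phi> (j + k - l) + (of_int l / of_int k) *\<^sub>R c"
    and "isum (\<lambda>i. W (j + i)) 0 (l - 1) = \<phi> (j + l) - \<phi> j + (of_int l / of_int k) *\<^sub>R c"
proof -
  have sum: "isum (\<lambda>i. W (j + i)) a b = \<phi> (j + b + 1) - \<phi> (j + a) + (of_int (b - a + 1) / of_int k) *\<^sub>R c"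
    for a b
    using isum_telescope[of "\<lambda>i. \<phi> (j + i)" "(1 / of_int k) *\<^sub>R c" a b] by (simp add: W add.assoc)
  show "isum (\<lambda>i. W (j + i)) 0 (k - 1) = \<phi> (j + k) - \<phi> j + c"
    using sum[of 0 "k - 1"] \<open>k > 0\<close> by simp
  show "isum (\<lambda>i. W (j + i)) (k - l) (k - 1) = \<phi> (j + k) - \<phi> (j + k - l) + (of_int l / of_int k) *\<^sub>R c"
    using sum[of "k - l" "k - 1"] by (simp add: algebra_simps)
  show "isum (\<lambda>i. W (j + i)) 0 (l - 1) = \<phi> (j + l) - \<phi> j + (of_int l / of_int k) *\<^sub>R c"
    using sum[of 0 "l - 1"] by simp
qed

section \<open>Cauchy matrix relations\<close>

locale cauchy_relations =
  fixes P Q :: "complex^'n^'n" and k l :: int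
    and \<theta> :: "int \<Rightarrow> complex^'n^'m" and \<eta> :: "int \<Rightarrow> complex^'m^'n"
    and \<Omega> :: "int \<Rightarrow> complex^'n^'n"
  assumes \<Omega>_invertible: "invertible (\<Omega> j)"
    and \<Omega>_shift: "\<Omega> (j + l) = \<Omega> j + \<eta> j ** \<theta> j"
    and \<theta>_recurrence: "\<theta> (j + k) + \<theta> (j + k - l) = - (\<theta> j ** P)"
    and \<eta>_recurrence: "\<eta> (j - l) + \<eta> j = - (Q ** \<eta> (j + k - l))"
    and \<Omega>_intertwining: "Q ** \<Omega> (j + k - l) = \<Omega> j ** P + \<eta> (j - l) ** \<theta> (j + k - l)"
begin

abbreviation \<Omega>inv :: "int \<Rightarrow> complex^'n^'n" where "\<Omega>inv j \<equiv> matrix_inv (\<Omega> j)"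

lemma \<Omega>inv_cancel_left: "\<Omega>inv j ** \<Omega> j = mat 1" "Z ** \<Omega>inv j ** \<Omega> j = Z"
  by (simp_all add: matrix_inv_left[OF \<Omega>_invertible] flip: matrix_mul_assoc)

lemma \<Omega>inv_cancel_right: "\<Omega> j ** \<Omega>inv j = mat 1" "Z ** \<Omega> j ** \<Omega>inv j = Z"
  by (simp_all add: matrix_inv_right[OF \<Omega>_invertible] flip: matrix_mul_assoc)

text \<open>In the notation of the theorem, \<open>F j = \<phi> j - \<phi>0\<close> and \<open>U j = \<phi> (j + k) - \<phi> j + I\<close>.\<close>

definition F :: "int \<Rightarrow> complex^'m^'m" where
  "F j = \<theta> j ** \<Omega>inv j ** \<eta> (j - l)"

definition U :: "int \<Rightarrow> complex^'m^'m" where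
  "U j = mat 1 + F (j + k) - F j"

text \<open>The time derivative of \<open>F j\<close> is \<open>D j\<close> plus a term coming from \<open>\<omega>\<close>; see \<open>F_derivative\<close>.\<close>

definition D :: "int \<Rightarrow> complex^'m^'m" where
  "D j = \<theta> (j + l) ** \<Omega>inv j ** \<eta> (j - l) - \<theta> j ** \<Omega>inv j ** \<eta> (j - l - l) - F j ** F j"

lemma \<theta>_mult_P: "\<theta> j ** P = - \<theta> (j + k) - \<theta> (j + k - l)"
  using \<theta>_recurrence[of j] by (simp add: eq_neg_iff_add_eq_0 algebra_simps)

lemma Q_mult_\<eta>: "Q ** \<eta> (j + k - l) = - \<eta> (j - l) - \<eta> j"
  using \<eta>_recurrence[of j] by (simp add: eq_neg_iff_add_eq_0 algebra_simps)

lemma U_mult_\<theta>: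
  "U j ** (\<theta> (j + k - l) ** \<Omega>inv (j + k - l)) = - (\<theta> (j + k) ** \<Omega>inv (j + k)) - \<theta> j ** \<Omega>inv j ** Q"
proof -
  have shift: "\<eta> (j + k - l) ** \<theta> (j + k - l) = \<Omega> (j + k) - \<Omega> (j + k - l)"
    using \<Omega>_shift[of "j + k - l"] by simp
  have intertwining: "\<eta> (j - l) ** \<theta> (j + k - l) = Q ** \<Omega> (j + k - l) - \<Omega> j ** P"
    using \<Omega>_intertwining[of j] by simp
  have "U j ** (\<theta> (j + k - l) ** \<Omega>inv (j + k - l)) = \<theta> (j + k - l) ** \<Omega>inv (j + k - l)
      + \<theta> (j + k) ** \<Omega>inv (j + k) ** (\<eta> (j + k - l) ** \<theta> (j + k - l)) ** \<Omega>inv (j + k - l)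
      - \<theta> j ** \<Omega>inv j ** (\<eta> (j - l) ** \<theta> (j + k - l)) ** \<Omega>inv (j + k - l)"
    by (simp add: U_def F_def matrix_ring_simps)
  also have "\<dots> = \<theta> (j + k - l) ** \<Omega>inv (j + k - l) + \<theta> (j + k) ** \<Omega>inv (j + k - l)
      - \<theta> (j + k) ** \<Omega>inv (j + k) - \<theta> j ** \<Omega>inv j ** Q + \<theta> j ** P ** \<Omega>inv (j + k - l)"
    unfolding shift intertwining by (simp add: matrix_ring_simps \<Omega>inv_cancel_left \<Omega>inv_cancel_right)
  also have "\<dots> = - (\<theta> (j + k) ** \<Omega>inv (j + k)) - \<theta> j ** \<Omega>inv j ** Q"
    by (simp add: \<theta>_mult_P matrix_ring_simps)
  finally show ?thesis .
qed

lemma \<eta>_mult_U: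
  "\<Omega>inv (j + l) ** \<eta> j ** U j = - (\<Omega>inv j ** \<eta> (j - l)) - P ** \<Omega>inv (j + k) ** \<eta> (j + k - l)"
proof -
  have shift: "\<eta> j ** \<theta> j = \<Omega> (j + l) - \<Omega> j"
    using \<Omega>_shift[of j] by simp
  have intertwining: "\<eta> j ** \<theta> (j + k) = Q ** \<Omega> (j + k) - \<Omega> (j + l) ** P"
    using \<Omega>_intertwining[of "j + l"] by simp
  have "\<Omega>inv (j + l) ** \<eta> j ** U j = \<Omega>inv (j + l) ** \<eta> j
      + \<Omega>inv (j + l) ** (\<eta> j ** \<theta> (j + k)) ** \<Omega>inv (j + k) ** \<eta> (j + k - l)
      - \<Omega>inv (j + l) ** (\<eta> j ** \<theta> j) ** \<Omega>inv j ** \<eta> (j - l)"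
    by (simp add: U_def F_def matrix_ring_simps)
  also have "\<dots> = \<Omega>inv (j + l) ** \<eta> j + \<Omega>inv (j + l) ** (Q ** \<eta> (j + k - l))
      - P ** \<Omega>inv (j + k) ** \<eta> (j + k - l) - \<Omega>inv j ** \<eta> (j - l) + \<Omega>inv (j + l) ** \<eta> (j - l)"
    unfolding shift intertwining
    by (simp add: matrix_ring_simps \<Omega>inv_cancel_left \<Omega>inv_cancel_right)
  also have "\<dots> = - (\<Omega>inv j ** \<eta> (j - l)) - P ** \<Omega>inv (j + k) ** \<eta> (j + k - l)"
    by (simp add: Q_mult_\<eta> matrix_ring_simps)
  finally show ?thesis .
qed

lemma D_difference:
  "D (j + k) - D j = - (U j ** (F (j + k) - F (j + k - l))) + (F (j + l) - F j) ** U j"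
proof -
  have U_F: "U j ** F (j + k) = F (j + k) + F (j + k) ** F (j + k) - F j ** F (j + k)"
   and F_U: "F j ** U j = F j + F j ** F (j + k) - F j ** F j"
    by (simp_all add: U_def matrix_ring_simps)
  have "Q ** \<eta> (j + k - l - l) = - \<eta> (j - l - l) - \<eta> (j - l)"
    using Q_mult_\<eta>[of "j - l"] by (simp add: algebra_simps)
  from arg_cong[OF this, of "\<lambda>Z. \<theta> j ** \<Omega>inv j ** Z"]
  have "\<theta> j ** \<Omega>inv j ** Q ** \<eta> (j + k - l - l) = - (\<theta> j ** \<Omega>inv j ** \<eta> (j - l - l)) - F j"
    by (simp add: F_def matrix_ring_simps)
  then have U_F_shifted: "U j ** F (j + k - l)
      = - (\<theta> (j + k) ** \<Omega>inv (j + k) ** \<eta> (j + k - l - l)) + \<theta> j ** \<Omega>inv j ** \<eta> (j - l - l) + F j"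
    using arg_cong[OF U_mult_\<theta>[of j], of "\<lambda>Z. Z ** \<eta> (j + k - l - l)"]
    by (simp add: F_def matrix_ring_simps)
  have "\<theta> (j + l) ** P = - \<theta> (j + k + l) - \<theta> (j + k)"
    using \<theta>_mult_P[of "j + l"] by (simp add: algebra_simps)
  from arg_cong[OF this, of "\<lambda>Z. Z ** \<Omega>inv (j + k) ** \<eta> (j + k - l)"]
  have "\<theta> (j + l) ** P ** \<Omega>inv (j + k) ** \<eta> (j + k - l)
      = - (\<theta> (j + k + l) ** \<Omega>inv (j + k) ** \<eta> (j + k - l)) - F (j + k)"
    by (simp add: F_def matrix_ring_simps)
  then have F_shifted_U: "F (j + l) ** U j
      = - (\<theta> (j + l) ** \<Omega>inv j ** \<eta> (j - l)) + \<theta> (j + k + l) ** \<Omega>inv (j + k) ** \<eta> (j + k - l) + F (j + k)"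
    using arg_cong[OF \<eta>_mult_U[of j], of "\<lambda>Z. \<theta> (j + l) ** Z"]
    by (simp add: F_def matrix_ring_simps)
  show ?thesis
    unfolding matrix_diff_ldistrib matrix_diff_rdistrib U_F F_U U_F_shifted F_shifted_U
    by (simp add: D_def algebra_simps)
qed

end

locale cauchy_flow =
  fixes P Q :: "complex^'n^'n" and k l :: int
    and \<theta> :: "real \<Rightarrow> int \<Rightarrow> complex^'n^'m" and \<eta> :: "real \<Rightarrow> int \<Rightarrow> complex^'m^'n"
    and \<Omega> :: "real \<Rightarrow> int \<Rightarrow> complex^'n^'n" and \<omega>' :: "real \<Rightarrow> complex^'n^'n"
  assumes relations: "cauchy_relations P Q k l (\<theta> t) (\<eta> t) (\<Omega> t)"
    and \<theta>_derivative: "((\<lambda>s. \<theta> s j) has_vector_derivative \<theta> t (j + l)) (at t)"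
    and \<eta>_derivative: "((\<lambda>s. \<eta> s j) has_vector_derivative - \<eta> t (j - l)) (at t)"
    and \<Omega>_derivative: "((\<lambda>s. \<Omega> s j) has_vector_derivative \<eta> t (j - l) ** \<theta> t j + \<omega>' t) (at t)"
    and \<omega>'_intertwining: "Q ** \<omega>' t = \<omega>' t ** P"

sublocale cauchy_flow \<subseteq> rel: cauchy_relations P Q k l "\<theta> t" "\<eta> t" "\<Omega> t" for t
  by (rule relations)

context cauchy_flow
begin

definition q :: "real \<Rightarrow> int \<Rightarrow> complex^'n^'m" where
  "q t j = \<theta> t j ** matrix_inv (\<Omega> t j) ** \<omega>' t"

definition r :: "real \<Rightarrow> int \<Rightarrow> complex^'m^'n" where
  "r t j = - (matrix_inv (\<Omega> t (j + l)) ** \<eta> t j)"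

lemma F_derivative: "((\<lambda>s. rel.F s j) has_vector_derivative rel.D t j + q t j ** r t (j - l)) (at t)"
proof -
  have "((\<lambda>s. \<theta> s j ** matrix_inv (\<Omega> s j) ** \<eta> s (j - l)) has_vector_derivative
      \<theta> t j ** matrix_inv (\<Omega> t j) ** - \<eta> t (j - l - l)
      + (\<theta> t j ** - (matrix_inv (\<Omega> t j) ** (\<eta> t (j - l) ** \<theta> t j + \<omega>' t) ** matrix_inv (\<Omega> t j))
         + \<theta> t (j + l) ** matrix_inv (\<Omega> t j)) ** \<eta> t (j - l)) (at t)"
    by (intro has_vector_derivative_matrix_mult has_vector_derivative_matrix_inv
        \<theta>_derivative \<eta>_derivative \<Omega>_derivative rel.\<Omega>_invertible)
  then show ?thesis
    by (simp add: rel.F_def rel.D_def q_def r_def matrix_ring_simps algebra_simps)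
qed

lemma F_difference_derivative:
  "((\<lambda>s. rel.F s (j + k) - rel.F s j) has_vector_derivative
      q t (j + k) ** r t (j + k - l) - q t j ** r t (j - l)
      - rel.U t j ** (rel.F t (j + k) - rel.F t (j + k - l)) + (rel.F t (j + l) - rel.F t j) ** rel.U t j)
    (at t)"
  by (rule has_vector_derivative_eq_rhs[OF has_vector_derivative_diff[OF F_derivative F_derivative]])
    (simp add: rel.D_difference[of t j, unfolded diff_eq_eq])

lemma q_recurrence: "q t (j + k) = - (rel.U t j ** q t (j + k - l)) - q t j ** P"
proof -
  have intertwining: "Z ** Q ** \<omega>' t = Z ** \<omega>' t ** P" for Z :: "complex^'n^'m"
    by (simp add: \<omega>'_intertwining flip: matrix_mul_assoc)
  have "rel.U t j ** q t (j + k - l)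
      = rel.U t j ** (\<theta> t (j + k - l) ** matrix_inv (\<Omega> t (j + k - l))) ** \<omega>' t"
    by (simp add: q_def matrix_mul_assoc)
  also have "\<dots> = - q t (j + k) - q t j ** P"
    unfolding rel.U_mult_\<theta> by (simp add: q_def matrix_ring_simps intertwining)
  finally show ?thesis by simp
qed

lemma r_recurrence: "r t (j - l) = - (r t j ** rel.U t j) - P ** r t (j + k - l)"
  using rel.\<eta>_mult_U[of t j] by (simp add: r_def matrix_ring_simps algebra_simps)

lemma U_derivative:
  "((\<lambda>s. rel.U s j) has_vector_derivative
      q t (j + k) ** r t (j + k - l) - q t j ** r t (j - l)
      - rel.U t j ** (rel.F t (j + k) - rel.F t (j + k - l) + a *\<^sub>R mat 1)
      + (rel.F t (j + l) - rel.F t j + a *\<^sub>R mat 1) ** rel.U t j) (at t)"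
proof -
  have U: "rel.F s (j + k) - rel.F s j + mat 1 = rel.U s j" for s
    by (simp add: rel.U_def)
  show ?thesis
    using has_vector_derivative_add_const[THEN iffD2, OF F_difference_derivative[of j t], of "mat 1"]
    unfolding U
    by (rule has_vector_derivative_eq_rhs)
      (simp add: matrix_add_ldistrib matrix_add_rdistrib matrix_scalar_ac scalar_matrix_assoc[symmetric])
qed

end

section \<open>Exponential solutions\<close>

definition dispersion :: "complex^'n^'n \<Rightarrow> int \<Rightarrow> int \<Rightarrow> complex^'n^'n" where
  "dispersion \<Lambda> k l = - (mpow_int \<Lambda> k + mpow_int \<Lambda> (k - l))"

definition exp_theta :: "complex^'n^'m \<Rightarrow> complex^'n^'n \<Rightarrow> int \<Rightarrow> real \<Rightarrow> int \<Rightarrow> complex^'n^'m" where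
  "exp_theta A \<Lambda> l t j = A ** mexp (t *\<^sub>R mpow_int \<Lambda> l) ** mpow_int \<Lambda> j"

definition exp_eta :: "complex^'m^'n \<Rightarrow> complex^'n^'n \<Rightarrow> int \<Rightarrow> real \<Rightarrow> int \<Rightarrow> complex^'m^'n" where
  "exp_eta B \<Lambda> l t j = mexp (- t *\<^sub>R mpow_int \<Lambda> l) ** mpow_int \<Lambda> (- j) ** B"

lemma dispersion_mpow_int_commute:
  "invertible \<Lambda> \<Longrightarrow> dispersion \<Lambda> k l ** mpow_int \<Lambda> j = mpow_int \<Lambda> j ** dispersion \<Lambda> k l"
  by (simp add: dispersion_def matrix_ring_simps mpow_int_commute)

lemma mpow_int_mult_dispersion:
  "invertible \<Lambda> \<Longrightarrow> mpow_int \<Lambda> j ** dispersion \<Lambda> k l = - (mpow_int \<Lambda> (j + k) + mpow_int \<Lambda> (j + k - l))"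
  by (simp add: dispersion_def matrix_ring_simps mpow_int_add[symmetric] add_diff_eq)

lemma exp_theta_recurrence:
  assumes "invertible \<Lambda>"
  shows "exp_theta A \<Lambda> l t (j + k) + exp_theta A \<Lambda> l t (j + k - l) = - (exp_theta A \<Lambda> l t j ** dispersion \<Lambda> k l)"
  by (simp add: exp_theta_def mpow_int_mult_dispersion[OF assms] matrix_ring_simps flip: matrix_mul_assoc)

lemma exp_eta_recurrence:
  assumes "invertible \<Lambda>"
  shows "exp_eta B \<Lambda> l t (j - l) + exp_eta B \<Lambda> l t j = - (dispersion \<Lambda> k l ** exp_eta B \<Lambda> l t (j + k - l))"
proof -
  let ?E = "mexp (- t *\<^sub>R mpow_int \<Lambda> l)" and ?D = "dispersion \<Lambda> k l"
  have "?D ** ?E = ?E ** ?D"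
    by (intro mexp_scaleR_commute_with dispersion_mpow_int_commute assms)
  then have "?D ** exp_eta B \<Lambda> l t (j + k - l) = ?E ** (?D ** mpow_int \<Lambda> (- (j + k - l))) ** B"
    by (simp add: exp_eta_def matrix_mul_assoc)
  also have "?D ** mpow_int \<Lambda> (- (j + k - l)) = mpow_int \<Lambda> (- (j + k - l)) ** ?D"
    by (rule dispersion_mpow_int_commute[OF assms])
  also have "mpow_int \<Lambda> (- (j + k - l)) ** ?D = - (mpow_int \<Lambda> (- (j - l)) + mpow_int \<Lambda> (- j))"
    using mpow_int_mult_dispersion[OF assms, of "- (j + k - l)" k l] by (simp add: algebra_simps)
  finally show ?thesis
    by (simp add: exp_eta_def matrix_ring_simps)
qed

lemma exp_theta_derivative:
  assumes "invertible \<Lambda>"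
  shows "((\<lambda>s. exp_theta A \<Lambda> l s j) has_vector_derivative exp_theta A \<Lambda> l t (j + l)) (at t)"
proof -
  have "((\<lambda>s. A ** mexp (s *\<^sub>R mpow_int \<Lambda> l) ** mpow_int \<Lambda> j) has_vector_derivative
      A ** (mexp (t *\<^sub>R mpow_int \<Lambda> l) ** mpow_int \<Lambda> l) ** mpow_int \<Lambda> j) (at t)"
    by (rule has_vector_derivative_eq_rhs, (rule has_vector_derivative_matrix_mult
          has_vector_derivative_const has_vector_derivative_mexp)+) simp
  moreover have "mpow_int \<Lambda> (j + l) = mpow_int \<Lambda> l ** mpow_int \<Lambda> j"
    by (simp add: mpow_int_add[OF assms, symmetric] add.commute)
  ultimately show ?thesis
    by (simp add: exp_theta_def matrix_mul_assoc)
qed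

lemma exp_eta_derivative:
  assumes "invertible \<Lambda>"
  shows "((\<lambda>s. exp_eta B \<Lambda> l s j) has_vector_derivative - exp_eta B \<Lambda> l t (j - l)) (at t)"
proof -
  have mexp_neg: "((\<lambda>s. mexp (- s *\<^sub>R M)) has_vector_derivative - (mexp (- t *\<^sub>R M) ** M)) (at t)" for M
    using has_vector_derivative_mexp[of "- M" t] by (simp add: matrix_minus_right)
  have "((\<lambda>s. mexp (- s *\<^sub>R mpow_int \<Lambda> l) ** mpow_int \<Lambda> (- j) ** B) has_vector_derivative
      - (mexp (- t *\<^sub>R mpow_int \<Lambda> l) ** mpow_int \<Lambda> l) ** mpow_int \<Lambda> (- j) ** B) (at t)"
    by (rule has_vector_derivative_eq_rhs, (rule has_vector_derivative_matrix_mult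
          has_vector_derivative_const mexp_neg)+) simp
  moreover have "mpow_int \<Lambda> (- (j - l)) = mpow_int \<Lambda> l ** mpow_int \<Lambda> (- j)"
    by (simp add: mpow_int_add[OF assms, symmetric])
  ultimately show ?thesis
    by (simp add: exp_eta_def matrix_mul_assoc matrix_minus_left)
qed

text \<open>A summand of \<open>\<Omega>\<close> is an \<open>\<eta>\<close>-summand with \<open>X\<close> in place of \<open>B\<close> times a \<open>\<theta>\<close>-summand with
  \<open>A = I\<close>; this factorisation reduces the identities for \<open>\<Omega>\<close> to those for \<open>\<theta>\<close> and \<open>\<eta>\<close>.\<close>

lemma exp_sylvester_shift:
  assumes \<Lambda>: "invertible \<Lambda>" and \<Lambda>': "invertible \<Lambda>'"
    and sylvester: "mpow_int \<Lambda>' (- l) ** X ** mpow_int \<Lambda> l - X = B ** A"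
  shows "exp_eta X \<Lambda>' l t (a + l) ** exp_theta (mat 1) \<Lambda> l t (b + l)
    = exp_eta X \<Lambda>' l t a ** exp_theta (mat 1) \<Lambda> l t b + exp_eta B \<Lambda>' l t a ** exp_theta A \<Lambda> l t b"
proof -
  let ?E = "mexp (t *\<^sub>R mpow_int \<Lambda> l)" and ?E' = "mexp (- t *\<^sub>R mpow_int \<Lambda>' l)"
  have "mpow_int \<Lambda>' (- (a + l)) = mpow_int \<Lambda>' (- a) ** mpow_int \<Lambda>' (- l)"
    by (simp add: mpow_int_add[OF \<Lambda>', symmetric])
  moreover have "mpow_int \<Lambda> (b + l) = mpow_int \<Lambda> l ** mpow_int \<Lambda> b"
    by (simp add: mpow_int_add[OF \<Lambda>, symmetric] add.commute)
  ultimately have "exp_eta X \<Lambda>' l t (a + l) ** exp_theta (mat 1) \<Lambda> l t (b + l)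
      = ?E' ** mpow_int \<Lambda>' (- a) ** (mpow_int \<Lambda>' (- l) ** X ** mpow_int \<Lambda> l) ** ?E ** mpow_int \<Lambda> b"
    by (simp add: exp_eta_def exp_theta_def matrix_mul_assoc mexp_scaleR_commute)
  also have "mpow_int \<Lambda>' (- l) ** X ** mpow_int \<Lambda> l = X + B ** A"
    using sylvester by (simp add: algebra_simps)
  finally show ?thesis
    by (simp add: exp_eta_def exp_theta_def matrix_ring_simps)
qed

lemma exp_omega_derivative:
  assumes \<Lambda>: "invertible \<Lambda>" and \<Lambda>': "invertible \<Lambda>'"
    and sylvester: "mpow_int \<Lambda>' (- l) ** X ** mpow_int \<Lambda> l - X = B ** A"
  shows "((\<lambda>s. exp_eta X \<Lambda>' l s j ** exp_theta (mat 1) \<Lambda> l s j) has_vector_derivative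
    exp_eta B \<Lambda>' l t (j - l) ** exp_theta A \<Lambda> l t j) (at t)"
  using exp_sylvester_shift[OF \<Lambda> \<Lambda>' sylvester, of t "j - l" j]
  by (intro has_vector_derivative_eq_rhs[OF has_vector_derivative_matrix_mult[OF
        exp_eta_derivative[OF \<Lambda>'] exp_theta_derivative[OF \<Lambda>]]])
    (simp add: matrix_minus_left)

lemma exp_omega_intertwining:
  assumes \<Lambda>: "invertible \<Lambda>" and \<Lambda>': "invertible \<Lambda>'"
    and sylvester: "mpow_int \<Lambda>' (- l) ** X ** mpow_int \<Lambda> l - X = B ** A"
  shows "dispersion \<Lambda>' k l ** (exp_eta X \<Lambda>' l t (j + k - l) ** exp_theta (mat 1) \<Lambda> l t (j + k - l))
    = exp_eta X \<Lambda>' l t j ** exp_theta (mat 1) \<Lambda> l t j ** dispersion \<Lambda> k l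
      + exp_eta B \<Lambda>' l t (j - l) ** exp_theta A \<Lambda> l t (j + k - l)"
proof -
  let ?e = "exp_eta X \<Lambda>' l t" and ?f = "exp_theta (mat 1) \<Lambda> l t"
  have e_recurrence: "dispersion \<Lambda>' k l ** ?e (j + k - l) = - ?e (j - l) - ?e j"
    using exp_eta_recurrence[OF \<Lambda>', of X l t j k] by (simp add: eq_neg_iff_add_eq_0 algebra_simps)
  have f_recurrence: "?f j ** dispersion \<Lambda> k l = - ?f (j + k) - ?f (j + k - l)"
    using exp_theta_recurrence[OF \<Lambda>, of "mat 1" l t j k] by (simp add: eq_neg_iff_add_eq_0 algebra_simps)
  have shift: "?e j ** ?f (j + k) = ?e (j - l) ** ?f (j + k - l)
      + exp_eta B \<Lambda>' l t (j - l) ** exp_theta A \<Lambda> l t (j + k - l)"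
    using exp_sylvester_shift[OF \<Lambda> \<Lambda>' sylvester, of t "j - l" "j + k - l"] by simp
  have "dispersion \<Lambda>' k l ** (?e (j + k - l) ** ?f (j + k - l))
      = - (?e (j - l) ** ?f (j + k - l)) - ?e j ** ?f (j + k - l)"
    using e_recurrence by (simp add: matrix_ring_simps)
  also have "\<dots> = ?e j ** (?f j ** dispersion \<Lambda> k l)
      + exp_eta B \<Lambda>' l t (j - l) ** exp_theta A \<Lambda> l t (j + k - l)"
    unfolding f_recurrence by (simp add: matrix_diff_ldistrib matrix_minus_right shift)
  finally show ?thesis
    by (simp add: matrix_mul_assoc)
qed

locale exponential_cauchy_data =
  fixes P Q :: "complex^'n^'n" and k l :: int
    and RP RQ :: "(complex^'n^'n) set"
    and A :: "complex^'n^'n \<Rightarrow> complex^'n^'m" and B :: "complex^'n^'n \<Rightarrow> complex^'m^'n"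
    and X :: "complex^'n^'n \<Rightarrow> complex^'n^'n \<Rightarrow> complex^'n^'n"
    and \<omega> \<omega>' :: "real \<Rightarrow> complex^'n^'n"
    and \<theta> :: "real \<Rightarrow> int \<Rightarrow> complex^'n^'m" and \<eta> :: "real \<Rightarrow> int \<Rightarrow> complex^'m^'n"
    and \<Omega> :: "real \<Rightarrow> int \<Rightarrow> complex^'n^'n"
  assumes RP_invertible: "\<Lambda> \<in> RP \<Longrightarrow> invertible \<Lambda>"
    and RP_dispersion: "\<Lambda> \<in> RP \<Longrightarrow> dispersion \<Lambda> k l = P"
    and RQ_invertible: "\<Lambda>' \<in> RQ \<Longrightarrow> invertible \<Lambda>'"
    and RQ_dispersion: "\<Lambda>' \<in> RQ \<Longrightarrow> dispersion \<Lambda>' k l = Q"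
    and sylvester: "\<Lambda> \<in> RP \<Longrightarrow> \<Lambda>' \<in> RQ \<Longrightarrow>
      mpow_int \<Lambda>' (- l) ** X \<Lambda>' \<Lambda> ** mpow_int \<Lambda> l - X \<Lambda>' \<Lambda> = B \<Lambda>' ** A \<Lambda>"
    and \<omega>_derivative: "(\<omega> has_vector_derivative \<omega>' t) (at t)"
    and \<omega>_intertwining: "Q ** \<omega> t = \<omega> t ** P"
    and \<theta>_eq: "\<theta> t j = (\<Sum>\<Lambda>\<in>RP. exp_theta (A \<Lambda>) \<Lambda> l t j)"
    and \<eta>_eq: "\<eta> t j = (\<Sum>\<Lambda>'\<in>RQ. exp_eta (B \<Lambda>') \<Lambda>' l t j)"
    and \<Omega>_eq: "\<Omega> t j =
      (\<Sum>\<Lambda>\<in>RP. \<Sum>\<Lambda>'\<in>RQ. exp_eta (X \<Lambda>' \<Lambda>) \<Lambda>' l t j ** exp_theta (mat 1) \<Lambda> l t j) + \<omega> t"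
    and \<Omega>_invertible: "invertible (\<Omega> t j)"
begin

lemma \<eta>_mult_\<theta>:
  "\<eta> t a ** \<theta> t b = (\<Sum>\<Lambda>\<in>RP. \<Sum>\<Lambda>'\<in>RQ. exp_eta (B \<Lambda>') \<Lambda>' l t a ** exp_theta (A \<Lambda>) \<Lambda> l t b)"
  by (simp add: \<eta>_eq \<theta>_eq matrix_sum_ldistrib matrix_sum_rdistrib sum.swap[of _ RQ])

lemma \<theta>_recurrence: "\<theta> t (j + k) + \<theta> t (j + k - l) = - (\<theta> t j ** P)"
proof -
  have "\<theta> t (j + k) + \<theta> t (j + k - l) = (\<Sum>\<Lambda>\<in>RP. - (exp_theta (A \<Lambda>) \<Lambda> l t j ** P))"
    unfolding \<theta>_eq sum.distrib[symmetric]
    by (rule sum.cong) (simp_all add: exp_theta_recurrence RP_invertible RP_dispersion)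
  then show ?thesis by (simp add: \<theta>_eq matrix_sum_rdistrib sum_negf)
qed

lemma \<eta>_recurrence: "\<eta> t (j - l) + \<eta> t j = - (Q ** \<eta> t (j + k - l))"
proof -
  have "\<eta> t (j - l) + \<eta> t j = (\<Sum>\<Lambda>'\<in>RQ. - (Q ** exp_eta (B \<Lambda>') \<Lambda>' l t (j + k - l)))"
    unfolding \<eta>_eq sum.distrib[symmetric]
    by (rule sum.cong) (simp_all add: exp_eta_recurrence[where k = k] RQ_invertible RQ_dispersion)
  then show ?thesis by (simp add: \<eta>_eq matrix_sum_ldistrib sum_negf)
qed

lemma \<Omega>_shift: "\<Omega> t (j + l) = \<Omega> t j + \<eta> t j ** \<theta> t j"
  unfolding \<Omega>_eq \<eta>_mult_\<theta>
  by (simp add: exp_sylvester_shift RP_invertible RQ_invertible sylvester sum.distrib[symmetric])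

lemma \<Omega>_intertwining: "Q ** \<Omega> t (j + k - l) = \<Omega> t j ** P + \<eta> t (j - l) ** \<theta> t (j + k - l)"
proof -
  have "Q ** \<Omega> t (j + k - l) - \<Omega> t j ** P
    = (\<Sum>\<Lambda>\<in>RP. \<Sum>\<Lambda>'\<in>RQ. dispersion \<Lambda>' k l ** (exp_eta (X \<Lambda>' \<Lambda>) \<Lambda>' l t (j + k - l)
        ** exp_theta (mat 1) \<Lambda> l t (j + k - l))
      - exp_eta (X \<Lambda>' \<Lambda>) \<Lambda>' l t j ** exp_theta (mat 1) \<Lambda> l t j ** dispersion \<Lambda> k l)"
    by (simp add: \<Omega>_eq matrix_add_ldistrib matrix_add_rdistrib matrix_sum_ldistrib
        matrix_sum_rdistrib sum_subtractf \<omega>_intertwining RP_dispersion RQ_dispersion cong: sum.cong)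
  also have "\<dots> = \<eta> t (j - l) ** \<theta> t (j + k - l)"
    unfolding \<eta>_mult_\<theta>
    by (simp add: exp_omega_intertwining RP_invertible RQ_invertible sylvester)
  finally show ?thesis by (simp add: algebra_simps)
qed

lemma \<omega>'_intertwining: "Q ** \<omega>' t = \<omega>' t ** P"
proof -
  have "((\<lambda>s. Q ** \<omega> s - \<omega> s ** P) has_vector_derivative Q ** \<omega>' t - \<omega>' t ** P) (at t)"
    by (rule has_vector_derivative_eq_rhs, (rule has_vector_derivative_diff
          has_vector_derivative_matrix_mult has_vector_derivative_const \<omega>_derivative)+) simp
  moreover have "((\<lambda>s. Q ** \<omega> s - \<omega> s ** P) has_vector_derivative 0) (at t)"
    by (simp add: \<omega>_intertwining)
  ultimately show ?thesis
    using vector_derivative_unique_at by fastforce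
qed

lemma cauchy_flow: "cauchy_flow P Q k l \<theta> \<eta> \<Omega> \<omega>'"
proof (unfold_locales)
  show "((\<lambda>s. \<theta> s j) has_vector_derivative \<theta> t (j + l)) (at t)" for t j
    unfolding \<theta>_eq by (intro has_vector_derivative_sum exp_theta_derivative RP_invertible)
  show "((\<lambda>s. \<eta> s j) has_vector_derivative - \<eta> t (j - l)) (at t)" for t j
    unfolding \<eta>_eq sum_negf[symmetric]
    by (intro has_vector_derivative_sum exp_eta_derivative RQ_invertible)
  show "((\<lambda>s. \<Omega> s j) has_vector_derivative \<eta> t (j - l) ** \<theta> t j + \<omega>' t) (at t)" for t j
    unfolding \<Omega>_eq \<eta>_mult_\<theta>
    by (intro has_vector_derivative_add has_vector_derivative_sum exp_omega_derivative
        RP_invertible RQ_invertible sylvester \<omega>_derivative)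
qed (fact \<Omega>_invertible \<Omega>_shift \<theta>_recurrence \<eta>_recurrence \<Omega>_intertwining \<omega>'_intertwining)+

end

theorem mainTheorem4:
  fixes k l :: int
    and P Q :: "complex^'n^'n"
    and RP RQ :: "(complex^'n^'n) set"
    and A :: "complex^'n^'n \<Rightarrow> complex^'n^'m"
    and B :: "complex^'n^'n \<Rightarrow> complex^'m^'n"
    and X :: "complex^'n^'n \<Rightarrow> complex^'n^'n \<Rightarrow> complex^'n^'n"
    and \<omega> \<omega>' :: "real \<Rightarrow> complex^'n^'n"
    and \<phi>0 :: "complex^'m^'m"
    and \<theta> \<eta> \<Omega> :: "real \<Rightarrow> int \<Rightarrow> _"
    and \<phi> qh rt W :: "real \<Rightarrow> int \<Rightarrow> _"
  assumes kpos: "k > 0"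
    and finP: "finite RP" and finQ: "finite RQ"
    and RP_inv: "\<And>\<Lambda>. \<Lambda> \<in> RP \<Longrightarrow> invertible \<Lambda>"
    and RP_eq: "\<And>\<Lambda>. \<Lambda> \<in> RP \<Longrightarrow> - (mpow_int \<Lambda> k + mpow_int \<Lambda> (k - l)) = P"
    and RQ_inv: "\<And>\<Lambda>'. \<Lambda>' \<in> RQ \<Longrightarrow> invertible \<Lambda>'"
    and RQ_eq: "\<And>\<Lambda>'. \<Lambda>' \<in> RQ \<Longrightarrow> - (mpow_int \<Lambda>' k + mpow_int \<Lambda>' (k - l)) = Q"
    and X_eq: "\<And>\<Lambda> \<Lambda>'. \<Lambda> \<in> RP \<Longrightarrow> \<Lambda>' \<in> RQ \<Longrightarrow>
        mpow_int \<Lambda>' (- l) ** X \<Lambda>' \<Lambda> ** mpow_int \<Lambda> l - X \<Lambda>' \<Lambda> = B \<Lambda>' ** A \<Lambda>"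
    and \<omega>_deriv: "\<And>t. (\<omega> has_vector_derivative \<omega>' t) (at t)"
    and \<omega>_comm: "\<And>t. Q ** \<omega> t = \<omega> t ** P"
    and \<theta>_def: "\<theta> \<equiv> (\<lambda>t j. \<Sum>\<Lambda>\<in>RP. A \<Lambda> ** mexp (t *\<^sub>R mpow_int \<Lambda> l) ** mpow_int \<Lambda> j)"
    and \<eta>_def: "\<eta> \<equiv> (\<lambda>t j. \<Sum>\<Lambda>'\<in>RQ. mexp (- t *\<^sub>R mpow_int \<Lambda>' l) ** mpow_int \<Lambda>' (- j) ** B \<Lambda>')"
    and \<Omega>_def: "\<Omega> \<equiv> (\<lambda>t j. (\<Sum>\<Lambda>\<in>RP. \<Sum>\<Lambda>'\<in>RQ.
        mexp (- t *\<^sub>R mpow_int \<Lambda>' l) ** mpow_int \<Lambda>' (- j) ** X \<Lambda>' \<Lambda>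
          ** mexp (t *\<^sub>R mpow_int \<Lambda> l) ** mpow_int \<Lambda> j) + \<omega> t)"
    and \<Omega>_inv: "\<And>t j. invertible (\<Omega> t j)"
    and \<phi>_def: "\<phi> \<equiv> (\<lambda>t j. \<phi>0 + \<theta> t j ** matrix_inv (\<Omega> t j) ** \<eta> t (j - l))"
    and qh_def: "qh \<equiv> (\<lambda>t j. - (\<theta> t j ** matrix_inv (\<Omega> t j) ** (- \<omega>' t)))"
    and rt_def: "rt \<equiv> (\<lambda>t j. - (matrix_inv (\<Omega> t (j + l)) ** \<eta> t j))"
    and W_def: "W \<equiv> (\<lambda>t j. \<phi> t (j + 1) - \<phi> t j + (1 / real_of_int k) *\<^sub>R mat 1)"
  shows
    "(\<forall>t j.
        ((\<lambda>s. \<phi> s (j + k) - \<phi> s j) has_vector_derivative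
          ((qh t (j + k) ** rt t (j + k - l) - qh t j ** rt t (j - l))
           - (\<phi> t (j + k) - \<phi> t j + mat 1) ** (\<phi> t (j + k) - \<phi> t (j + k - l))
           + (\<phi> t (j + l) - \<phi> t j) ** (\<phi> t (j + k) - \<phi> t j + mat 1))) (at t)
      \<and> qh t (j + k) = - ((\<phi> t (j + k) - \<phi> t j + mat 1) ** qh t (j + k - l)) - qh t j ** P
      \<and> rt t (j - l) = - (rt t j ** (\<phi> t (j + k) - \<phi> t j + mat 1)) - P ** rt t (j + k - l))
   \<and> (\<forall>t j.
        ((\<lambda>s. isum (\<lambda>i. W s (j + i)) 0 (k - 1)) has_vector_derivative
          ((qh t (j + k) ** rt t (j + k - l) - qh t j ** rt t (j - l))
           - isum (\<lambda>i. W t (j + i)) 0 (k - 1) ** isum (\<lambda>i. W t (j + i)) (k - l) (k - 1)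
           + isum (\<lambda>i. W t (j + i)) 0 (l - 1) ** isum (\<lambda>i. W t (j + i)) 0 (k - 1))) (at t)
      \<and> qh t (j + k) = - (isum (\<lambda>i. W t (j + i)) 0 (k - 1) ** qh t (j + k - l)) - qh t j ** P
      \<and> rt t (j - l) = - (rt t j ** isum (\<lambda>i. W t (j + i)) 0 (k - 1)) - P ** rt t (j + k - l))"
proof -
  interpret exponential: exponential_cauchy_data P Q k l RP RQ A B X \<omega> \<omega>' \<theta> \<eta> \<Omega>
  proof unfold_locales
    show "\<Omega> t j = (\<Sum>\<Lambda>\<in>RP. \<Sum>\<Lambda>'\<in>RQ. exp_eta (X \<Lambda>' \<Lambda>) \<Lambda>' l t j ** exp_theta (mat 1) \<Lambda> l t j) + \<omega> t"
      for t j by (simp add: \<Omega>_def exp_eta_def exp_theta_def matrix_mul_assoc)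
  qed (simp_all add: RP_inv RQ_inv X_eq \<omega>_deriv \<omega>_comm \<Omega>_inv RP_eq[folded dispersion_def]
      RQ_eq[folded dispersion_def] \<theta>_def \<eta>_def exp_theta_def exp_eta_def)
  interpret cauchy_flow P Q k l \<theta> \<eta> \<Omega> \<omega>'
    by (rule exponential.cauchy_flow)
  have \<phi>_difference: "\<phi> t a - \<phi> t b = rel.F t a - rel.F t b" for t a b
    by (simp add: \<phi>_def rel.F_def)
  have U: "rel.F t (j + k) - rel.F t j + mat 1 = rel.U t j" for t j
    by (simp add: rel.U_def)
  have q: "qh = q" and r: "rt = r"
    by (simp_all add: qh_def q_def rt_def r_def fun_eq_iff matrix_minus_right)
  have W_sums:
    "isum (\<lambda>i. W t (j + i)) 0 (k - 1) = \<phi> t (j + k) - \<phi> t j + mat 1"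
    "isum (\<lambda>i. W t (j + i)) (k - l) (k - 1) = \<phi> t (j + k) - \<phi> t (j + k - l) + (of_int l / of_int k) *\<^sub>R mat 1"
    "isum (\<lambda>i. W t (j + i)) 0 (l - 1) = \<phi> t (j + l) - \<phi> t j + (of_int l / of_int k) *\<^sub>R mat 1" for t j
    by (rule isum_shifted_differences[where \<phi> = "\<phi> t", OF kpos], simp add: W_def)+
  show ?thesis
    unfolding W_sums \<phi>_difference U q r
    by (intro conjI allI F_difference_derivative U_derivative q_recurrence r_recurrence)
qed

end
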